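(* Let $\kappa:=\operatorname{arccosh}(3/2)$, $p$ a positive integer, $\xi:=\kappa+2p\pi i$, and \[ F(z):=\frac1\xi\left(\mathcal{L}_2\left(\frac{\xi(1-z)}{2\pi i}-p+1\right)-\mathcal{L}_2\left(\frac{\xi(1+z)}{2\pi i}-p\right)\right)-\kappa z+\frac{4p\pi^2}{\xi}. \] If $-\kappa<\Re(\xi z)<\kappa$ or $0<\Im(\xi z)<2\pi$, then \[ F(z)=\frac1\xi\mathrm{Li}_2\left(e^{-\xi(1+z)}\right)-\frac1\xi\mathrm{Li}_2\left(e^{-\xi(1-z)}\right)+\kappa z-2\pi i. \] Moreover, if $0<\Im(\xi z)<2\pi$, then also \[ F(z)=\frac1\xi\mathrm{Li}_2\left(e^{\xi(1-z)}\right)-\frac1\xi\mathrm{Li}_2\left(e^{\xi(1+z)}\right)-\kappa z+\frac{4p\pi^2}{\xi}. \]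
   Context: $\mathcal{L}_2(w):=\mathrm{Li}_2(e^{2\pi iw})$ if $\Im w\ge0$ and $\mathcal{L}_2(w):=\pi^2(2w^2-2w+\frac13)-\mathrm{Li}_2(e^{-2\pi iw})$ if $\Im w<0$, for $w\in\mathbb{C}\setminus((-\infty,0]\cup[1,\infty))$, where $\mathrm{Li}_2(z)=-\int_0^z\frac{\log(1-x)}{x}dx$ is the dilogarithm with branch cut $[1,\infty)$. *)

theory Defs
  imports "HOL-Complex_Analysis.Complex_Analysis"
begin

text \<open>Dilogarithm Li2(z) = - integral from 0 to z of log(1-x)/x dx, integrated along the
  straight segment from 0 to z (principal branch, branch cut [1,infinity)).  The integrand
  has a removable singularity at 0 with value -1.\<close>
definition Li2 :: "complex \<Rightarrow> complex" where
  "Li2 z = - contour_integral (linepath 0 z) (\<lambda>x. if x = 0 then -1 else Ln (1 - x) / x)"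

definition calL2 :: "complex \<Rightarrow> complex" where
  "calL2 w = (if Im w \<ge> 0 then Li2 (exp (2 * pi * \<i> * w))
              else of_real (pi^2) * (2 * w^2 - 2 * w + 1/3) - Li2 (exp (- 2 * pi * \<i> * w)))"

definition kappa :: real where
  "kappa = arcosh (3/2)"

definition xi :: "nat \<Rightarrow> complex" where
  "xi p = of_real kappa + 2 * of_nat p * of_real pi * \<i>"

definition Fp :: "nat \<Rightarrow> complex \<Rightarrow> complex" where
  "Fp p z = (1 / xi p) * (calL2 (xi p * (1 - z) / (2 * pi * \<i>) - of_nat p + 1)
                         - calL2 (xi p * (1 + z) / (2 * pi * \<i>) - of_nat p))
            - of_real kappa * z + 4 * of_nat p * of_real (pi^2) / xi p"

end

theory Submission
  imports Defs
begin

(*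
  The arguments w of calL2 in F are affine in z, and since they are shifted by the integers p and
  p - 1, exp (2 pi i w) = exp (xi (1 - z)) resp. exp (xi (1 + z)).  If -kappa < Re (xi z) < kappa,
  both arguments lie in the lower half plane, where calL2 is given by its second branch.  If
  0 < Im (xi z) < 2 pi, both lie in the strip 0 < Re w < 1, where the two branches agree by the
  inversion formula
    Li2 (exp (2 pi i w)) + Li2 (exp (-2 pi i w)) = pi^2 (2 w^2 - 2 w + 1/3).
  With the second branch, the polynomial parts combine to 2 kappa z - 2 pi i - 4 p pi^2 / xi,
  giving the first formula; the first branch directly gives the second formula.

  The inversion formula holds because both sides have derivative pi^2 (4 w - 2) on the strip
  (this uses Ln (1 - exp (2 pi i w)) - Ln (1 - exp (-2 pi i w)) = pi i (2 w - 1), proved in the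
  same way) and agree at w = 1/2, as Li2 (-1) = - pi^2 / 12.  This value is read off the power
  series of Li2 by continuity on the closed unit disc.
*)

lemma eq_on_convex_if_same_derivative:
  fixes f g :: "'a :: real_normed_field \<Rightarrow> 'a"
  assumes "convex S" "a \<in> S" "x \<in> S" "f a = g a"
    and "\<And>y. y \<in> S \<Longrightarrow> (f has_field_derivative h y) (at y)"
    and "\<And>y. y \<in> S \<Longrightarrow> (g has_field_derivative h y) (at y)"
  shows "f x = g x"
proof -
  have "\<exists>c. \<forall>y\<in>S. f y - g y = c"
  proof (rule has_field_derivative_zero_constant[OF assms(1)])
    fix y assume "y \<in> S"
    then have "((\<lambda>y. f y - g y) has_field_derivative h y - h y) (at y)"
      using assms(5,6) by (intro DERIV_diff)
    then show "((\<lambda>y. f y - g y) has_field_derivative 0) (at y within S)"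
      by (simp add: has_field_derivative_at_within)
  qed
  then show ?thesis
    using assms(2-4) by (metis eq_iff_diff_eq_0)
qed

section \<open>The dilogarithm on the slit plane\<close>

definition Li2_domain :: "complex set" where
  "Li2_domain = {z. Im z \<noteq> 0 \<or> Re z < 1}"

definition Li2_integrand :: "complex \<Rightarrow> complex" where
  "Li2_integrand x = (if x = 0 then -1 else Ln (1 - x) / x)"

lemma Li2_eq_contour_integral: "Li2 z = - contour_integral (linepath 0 z) Li2_integrand"
  unfolding Li2_def Li2_integrand_def by simp

lemma Li2_0 [simp]: "Li2 0 = 0"
  by (simp add: Li2_def)

lemma times_Li2_integrand: "x * Li2_integrand x = Ln (1 - x)"
  by (simp add: Li2_integrand_def)

lemma open_Li2_domain: "open Li2_domain"
proof -
  have "Li2_domain = {z. Im z < 0} \<union> {z. Im z > 0} \<union> {z. Re z < 1}"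
    unfolding Li2_domain_def by auto
  then show ?thesis
    by (metis open_Un open_halfspace_Im_lt open_halfspace_Im_gt open_halfspace_Re_lt)
qed

lemma one_minus_Li2_domain_notin_nonpos_Reals: "x \<in> Li2_domain \<Longrightarrow> 1 - x \<notin> \<real>\<^sub>\<le>\<^sub>0"
  unfolding Li2_domain_def by (auto simp: complex_nonpos_Reals_iff)

lemma closed_segment_0_subset_Li2_domain:
  assumes "x \<in> Li2_domain"
  shows "closed_segment 0 x \<subseteq> Li2_domain"
proof
  fix y assume "y \<in> closed_segment 0 x"
  then obtain u :: real where u: "0 \<le> u" "u \<le> 1" "y = u *\<^sub>R x"
    by (auto simp: closed_segment_def)
  have "u * Re x < 1" if "Re x < 1"
  proof (cases "Re x \<ge> 0")
    case True
    then show ?thesis using u that by (metis le_less_trans mult_left_le_one_le)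
  qed (use u mult_nonneg_nonpos[of u "Re x"] in linarith)
  then show "y \<in> Li2_domain"
    using assms u by (auto simp: Li2_domain_def)
qed

lemma starlike_Li2_domain: "starlike Li2_domain"
proof -
  have "0 \<in> Li2_domain"
    by (simp add: Li2_domain_def)
  then show ?thesis
    unfolding starlike_def using closed_segment_0_subset_Li2_domain by blast
qed

lemma Li2_integrand_tendsto_0: "(Li2_integrand \<longlongrightarrow> -1) (at 0)"
proof -
  have "((\<lambda>x. Ln (1 - x)) has_field_derivative -1) (at 0)"
    by (auto intro!: derivative_eq_intros)
  then have "((\<lambda>x. Ln (1 - x) / x) \<longlongrightarrow> -1) (at 0)"
    by (simp add: DERIV_def)
  then show ?thesis
    by (rule Lim_transform_eventually) (auto simp: Li2_integrand_def eventually_at_filter)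
qed

lemma holomorphic_on_Li2_integrand: "Li2_integrand holomorphic_on (Li2_domain - {0})"
proof (rule holomorphic_transform)
  show "(\<lambda>x. Ln (1 - x) / x) holomorphic_on (Li2_domain - {0})"
    using one_minus_Li2_domain_notin_nonpos_Reals by (auto intro!: holomorphic_intros)
qed (simp add: Li2_integrand_def)

lemma continuous_on_Li2_integrand: "continuous_on Li2_domain Li2_integrand"
proof -
  have "isCont Li2_integrand x" if "x \<in> Li2_domain" for x
  proof (cases "x = 0")
    case True
    then show ?thesis
      using Li2_integrand_tendsto_0 by (simp add: isCont_def Li2_integrand_def)
  next
    case False
    then show ?thesis
      using that holomorphic_on_imp_differentiable_at[OF holomorphic_on_Li2_integrand]
        open_Li2_domain by (simp add: field_differentiable_imp_continuous_at open_delete)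
  qed
  then show ?thesis
    by (simp add: continuous_at_imp_continuous_on)
qed

lemma has_field_derivative_Li2:
  assumes "x \<in> Li2_domain"
  shows "(Li2 has_field_derivative - Li2_integrand x) (at x)"
proof -
  obtain g where g: "\<And>x. x \<in> Li2_domain \<Longrightarrow> (g has_field_derivative Li2_integrand x) (at x)"
    using holomorphic_starlike_primitive[OF continuous_on_Li2_integrand starlike_Li2_domain
        open_Li2_domain, of "{0}"] holomorphic_on_Li2_integrand open_Li2_domain
    by (metis finite.emptyI finite_insert holomorphic_on_imp_differentiable_at open_delete)
  have "Li2 y = g 0 - g y" if "y \<in> Li2_domain" for y
  proof -
    have "(Li2_integrand has_contour_integral g y - g 0) (linepath 0 y)"
      using contour_integral_primitive[of Li2_domain g Li2_integrand "linepath 0 y"] g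
      closed_segment_0_subset_Li2_domain[OF that] by (simp add: has_field_derivative_at_within)
    then show ?thesis
      by (simp add: Li2_eq_contour_integral contour_integral_unique)
  qed
  moreover have "((\<lambda>y. g 0 - g y) has_field_derivative - Li2_integrand x) (at x)"
    using g[OF assms] by (auto intro!: derivative_eq_intros)
  ultimately show ?thesis
    using assms open_Li2_domain by (metis has_field_derivative_transform_within_open)
qed

lemma has_field_derivative_Li2_comp:
  assumes "(f has_field_derivative f') (at x)" "f x \<in> Li2_domain"
  shows "((\<lambda>x. Li2 (f x)) has_field_derivative - Li2_integrand (f x) * f') (at x)"
  using DERIV_chain2[OF has_field_derivative_Li2[OF assms(2)] assms(1)] .

section \<open>The power series of the dilogarithm\<close>

definition Li2_series :: "complex \<Rightarrow> complex" where
  "Li2_series z = (\<Sum>n. z ^ n / of_nat n ^ 2)"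

lemma norm_Li2_series_term_le:
  fixes z :: complex
  assumes "norm z \<le> 1"
  shows "norm (z ^ n / of_nat n ^ 2) \<le> inverse (real n ^ 2)"
proof -
  have "norm (z ^ n / of_nat n ^ 2) = norm z ^ n / real n ^ 2"
    by (simp add: norm_divide norm_power)
  also have "\<dots> \<le> 1 / real n ^ 2"
    using assms by (intro divide_right_mono power_le_one) auto
  finally show ?thesis
    by (simp add: divide_inverse)
qed

lemma summable_Li2_series:
  fixes z :: complex
  assumes "norm z \<le> 1"
  shows "summable (\<lambda>n. z ^ n / of_nat n ^ 2)"
proof (rule summable_norm_cancel, rule summable_comparison_test'[where N=0])
  show "summable (\<lambda>n. inverse (real n ^ 2))"
    by (rule inverse_power_summable) simp
  show "norm (norm (z ^ n / of_nat n ^ 2)) \<le> inverse (real n ^ 2)" for n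
    using norm_Li2_series_term_le[OF assms] by simp
qed

lemma continuous_on_Li2_series: "continuous_on (cball 0 1) Li2_series"
proof -
  have "uniform_limit (cball 0 1) (\<lambda>n z. \<Sum>i<n. z ^ i / of_nat i ^ 2) Li2_series sequentially"
    unfolding Li2_series_def
  proof (rule Weierstrass_m_test)
    show "summable (\<lambda>n. inverse (real n ^ 2))"
      by (rule inverse_power_summable) simp
  qed (simp add: norm_Li2_series_term_le)
  then show ?thesis
    by (rule uniform_limit_theorem[rotated])
       (auto intro!: always_eventually continuous_intros simp: divide_inverse)
qed

lemma sums_minus_Li2_integrand:
  fixes z :: complex
  assumes "norm z < 1"
  shows "(\<lambda>n. z ^ n / of_nat (Suc n)) sums - Li2_integrand z"
proof (cases "z = 0")
  case True
  then show ?thesis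
    using powser_sums_zero[of "\<lambda>n. 1 / of_nat (Suc n) :: complex"] by (simp add: Li2_integrand_def)
next
  case False
  have "(\<lambda>n. - (z ^ n) / of_nat n) sums Ln (1 - z)"
    using Ln_series'[of "-z"] assms by simp
  then have "(\<lambda>n. - (z ^ Suc n) / of_nat (Suc n)) sums Ln (1 - z)"
    by (subst sums_Suc_iff) simp
  then have "(\<lambda>n. (- (z ^ Suc n) / of_nat (Suc n)) / (- z)) sums (Ln (1 - z) / (- z))"
    by (rule sums_divide)
  then show ?thesis
    using False by (simp add: Li2_integrand_def del: of_nat_Suc)
qed

lemma has_field_derivative_Li2_series:
  assumes "norm z < 1"
  shows "(Li2_series has_field_derivative - Li2_integrand z) (at z)"
proof -
  have series: "Li2_series = (\<lambda>z. \<Sum>n. 1 / of_nat n ^ 2 * z ^ n)"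
    unfolding Li2_series_def by simp
  have "diffs (\<lambda>n. 1 / of_nat n ^ 2) n = 1 / (of_nat (Suc n) :: complex)" for n
    by (simp add: diffs_def power2_eq_square)
  then have "(Li2_series has_field_derivative (\<Sum>n. z ^ n / of_nat (Suc n))) (at z)"
    unfolding series using assms summable_Li2_series
    by (intro termdiffs_strong'[where K=1, THEN DERIV_cong]) auto
  then show ?thesis
    using sums_unique[OF sums_minus_Li2_integrand[OF assms]] by simp
qed

lemma Li2_series_0 [simp]: "Li2_series 0 = 0"
proof -
  have "(\<lambda>n. 0 ^ n / of_nat n ^ 2 :: complex) = (\<lambda>_. 0)"
    by (auto simp: power_0_left)
  then show ?thesis
    by (simp add: Li2_series_def)
qed

lemma Li2_eq_Li2_series:
  assumes "norm z < 1"
  shows "Li2 z = Li2_series z"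
proof (rule eq_on_convex_if_same_derivative
    [where S="ball 0 1" and a=0 and f=Li2 and g=Li2_series and h="\<lambda>y. - Li2_integrand y"])
  show "(Li2 has_field_derivative - Li2_integrand y) (at y)" if "y \<in> ball 0 1" for y
    using that complex_Re_le_cmod[of y] by (intro has_field_derivative_Li2) (simp add: Li2_domain_def)
  show "(Li2_series has_field_derivative - Li2_integrand y) (at y)" if "y \<in> ball 0 1" for y
    using that by (simp add: has_field_derivative_Li2_series)
qed (use assms in simp_all)

lemma sums_alternating_inverse_squares: "(\<lambda>n. (-1) ^ n / real n ^ 2) sums (- (pi ^ 2 / 12))"
proof -
  define a where "a n = 1 / real n ^ 2" for n
  have "(\<lambda>n. a (Suc n)) sums (pi ^ 2 / 6)"
    using inverse_squares_sums by (simp add: a_def add.commute)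
  then have a: "a sums (pi ^ 2 / 6)"
    by (subst (asm) sums_Suc_iff) (simp add: a_def)
  have "(\<lambda>k. a (2 * k)) sums (pi ^ 2 / 24)"
    using sums_divide[OF a, of 4] by (simp add: a_def power2_eq_square algebra_simps)
  then have even: "(\<lambda>n. if even n then a n else 0) sums (pi ^ 2 / 24)"
    by (subst sums_mono_reindex[of "(*) 2", symmetric]) (auto simp: strict_mono_def)
  have "(\<lambda>n. 2 * (if even n then a n else 0) - a n) sums (2 * (pi ^ 2 / 24) - pi ^ 2 / 6)"
    by (intro sums_diff sums_mult even a)
  moreover have "(\<lambda>n. 2 * (if even n then a n else 0) - a n) = (\<lambda>n. (-1) ^ n / real n ^ 2)"
    by (auto simp: a_def)
  ultimately show ?thesis
    by simp
qed

lemma Li2_minus_one: "Li2 (-1) = - of_real (pi ^ 2) / 12"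
proof -
  let ?F = "at (-1) within ball 0 1"
  have "-1 \<in> Li2_domain"
    by (simp add: Li2_domain_def)
  then have "(Li2 \<longlongrightarrow> Li2 (-1)) ?F"
    using DERIV_isCont[OF has_field_derivative_Li2]
    by (metis isCont_def subset_UNIV tendsto_within_subset)
  then have "(Li2_series \<longlongrightarrow> Li2 (-1)) ?F"
    by (rule Lim_transform_eventually) (auto simp: eventually_at_filter Li2_eq_Li2_series)
  moreover have "(Li2_series \<longlongrightarrow> Li2_series (-1)) (at (-1) within cball 0 1)"
    using continuous_on_Li2_series by (simp add: continuous_on_def)
  then have "(Li2_series \<longlongrightarrow> Li2_series (-1)) ?F"
    by (rule tendsto_within_subset) (rule ball_subset_cball)
  ultimately have "Li2 (-1) = Li2_series (-1)"
    by (rule tendsto_unique[rotated 1]) (simp add: trivial_limit_within islimpt_ball)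
  also have "\<dots> = of_real (- (pi ^ 2 / 12))"
    using sums_of_real[OF sums_alternating_inverse_squares, where 'a=complex]
    by (simp add: Li2_series_def sums_iff)
  finally show ?thesis
    by simp
qed

section \<open>The inversion formula\<close>

lemma convex_unit_strip: "convex {w. 0 < Re w \<and> Re w < 1}"
proof -
  have "{w. 0 < Re w \<and> Re w < 1} = {w. Re w > 0} \<inter> {w. Re w < 1}"
    by auto
  then show ?thesis
    by (metis convex_Int convex_halfspace_Re_gt convex_halfspace_Re_lt)
qed

lemma exp_unit_strip_in_Li2_domain:
  assumes "0 < Re w" "Re w < 1"
  shows "exp (2 * pi * \<i> * w) \<in> Li2_domain"
proof -
  let ?t = "2 * pi * Re w"
  have Im: "Im (exp (2 * pi * \<i> * w)) = exp (- 2 * pi * Im w) * sin ?t"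
    and Re: "Re (exp (2 * pi * \<i> * w)) = exp (- 2 * pi * Im w) * cos ?t"
    by (simp_all add: Im_exp Re_exp)
  show ?thesis
  proof (cases "sin ?t = 0")
    case True
    have "\<bar>?t - pi\<bar> < pi"
      using assms by (auto simp: abs_less_iff)
    moreover have "sin (?t - pi) = 0"
      using True by (simp add: sin_diff)
    ultimately have "?t = pi"
      using sin_zero_pi_iff by fastforce
    then have "cos ?t = -1"
      by (metis cos_pi)
    then show ?thesis
      using Re by (auto simp: Li2_domain_def intro: order.strict_trans[OF _ exp_gt_zero])
  qed (use Im in \<open>simp add: Li2_domain_def\<close>)
qed

lemma exp_minus_unit_strip_in_Li2_domain:
  assumes "0 < Re w" "Re w < 1"
  shows "exp (- 2 * pi * \<i> * w) \<in> Li2_domain"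
proof -
  have "exp (- 2 * pi * \<i> * w) = exp (2 * pi * \<i> * (1 - w))"
    by (simp add: right_diff_distrib exp_diff exp_minus inverse_eq_divide)
  then show ?thesis
    using exp_unit_strip_in_Li2_domain[of "1 - w"] assms by simp
qed

lemma has_field_derivative_Ln_one_minus_exp_diff:
  assumes "0 < Re y" "Re y < 1"
  shows "((\<lambda>y. Ln (1 - exp (2 * pi * \<i> * y)) - Ln (1 - exp (- 2 * pi * \<i> * y)))
           has_field_derivative 2 * pi * \<i>) (at y)"
proof -
  define u where "u = exp (2 * pi * \<i> * y)"
  define v where "v = exp (- 2 * pi * \<i> * y)"
  have "1 - u \<notin> \<real>\<^sub>\<le>\<^sub>0" "1 - v \<notin> \<real>\<^sub>\<le>\<^sub>0"
    using exp_unit_strip_in_Li2_domain[OF assms] exp_minus_unit_strip_in_Li2_domain[OF assms]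
    by (simp_all add: u_def v_def one_minus_Li2_domain_notin_nonpos_Reals)
  moreover have "1 - u \<noteq> 0" "1 - v \<noteq> 0"
    using calculation by auto
  ultimately have "((\<lambda>y. Ln (1 - exp (2 * pi * \<i> * y)) - Ln (1 - exp (- 2 * pi * \<i> * y)))
      has_field_derivative - (u * (2 * pi * \<i>)) / (1 - u) - v * (2 * pi * \<i>) / (1 - v)) (at y)"
    unfolding u_def v_def by (auto intro!: derivative_eq_intros simp: field_simps)
  moreover have "- (u * (2 * pi * \<i>)) / (1 - u) - v * (2 * pi * \<i>) / (1 - v) = 2 * pi * \<i>"
  proof -
    have v: "v = inverse u" and "u \<noteq> 0"
      by (simp_all add: u_def v_def exp_minus)
    have "v * (2 * pi * \<i>) / (1 - v) = - (2 * pi * \<i>) / (1 - u)"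
      unfolding v using \<open>u \<noteq> 0\<close> \<open>1 - u \<noteq> 0\<close> by (simp add: field_simps)
    then show ?thesis
      using \<open>1 - u \<noteq> 0\<close> by (simp add: field_simps)
  qed
  ultimately show ?thesis
    by simp
qed

lemma Ln_one_minus_exp_diff:
  assumes "0 < Re w" "Re w < 1"
  shows "Ln (1 - exp (2 * pi * \<i> * w)) - Ln (1 - exp (- 2 * pi * \<i> * w)) = pi * \<i> * (2 * w - 1)"
proof (rule eq_on_convex_if_same_derivative[OF convex_unit_strip, where a="1/2"
      and f="\<lambda>w. Ln (1 - exp (2 * pi * \<i> * w)) - Ln (1 - exp (- 2 * pi * \<i> * w))"
      and g="\<lambda>w. pi * \<i> * (2 * w - 1)" and h="\<lambda>_. 2 * pi * \<i>"])
  show "((\<lambda>y. pi * \<i> * (2 * y - 1)) has_field_derivative 2 * pi * \<i>) (at y)" for y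
    by (auto intro!: derivative_eq_intros)
qed (use assms has_field_derivative_Ln_one_minus_exp_diff in \<open>simp_all add: exp_minus\<close>)

(* 2 pi^2 B\<^sub>2 w, with B\<^sub>2 the second Bernoulli polynomial *)
definition Li2_inversion_poly :: "complex \<Rightarrow> complex" where
  "Li2_inversion_poly w = of_real (pi ^ 2) * (2 * w ^ 2 - 2 * w + 1 / 3)"

lemma has_field_derivative_Li2_exp_sum:
  assumes "0 < Re y" "Re y < 1"
  shows "((\<lambda>y. Li2 (exp (2 * pi * \<i> * y)) + Li2 (exp (- 2 * pi * \<i> * y)))
           has_field_derivative of_real (pi ^ 2) * (4 * y - 2)) (at y)"
proof -
  define u where "u = exp (2 * pi * \<i> * y)"
  define v where "v = exp (- 2 * pi * \<i> * y)"
  have "((\<lambda>y. Li2 (exp (2 * pi * \<i> * y)) + Li2 (exp (- 2 * pi * \<i> * y)))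
      has_field_derivative
        - Li2_integrand u * (u * (2 * pi * \<i>)) + - Li2_integrand v * (v * (- 2 * pi * \<i>))) (at y)"
    unfolding u_def v_def
    using exp_unit_strip_in_Li2_domain[OF assms] exp_minus_unit_strip_in_Li2_domain[OF assms]
    by (intro DERIV_add has_field_derivative_Li2_comp) (auto intro!: derivative_eq_intros)
  moreover have "- Li2_integrand u * (u * (2 * pi * \<i>)) + - Li2_integrand v * (v * (- 2 * pi * \<i>))
      = of_real (pi ^ 2) * (4 * y - 2)"
  proof -
    have "- Li2_integrand u * (u * (2 * pi * \<i>)) + - Li2_integrand v * (v * (- 2 * pi * \<i>))
        = - 2 * pi * \<i> * (Ln (1 - u) - Ln (1 - v))"
      by (simp add: times_Li2_integrand[symmetric] algebra_simps)
    also have "\<dots> = - 2 * pi * \<i> * (pi * \<i> * (2 * y - 1))"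
      using Ln_one_minus_exp_diff[OF assms] by (simp add: u_def v_def)
    also have "\<dots> = of_real (pi ^ 2) * (4 * y - 2)"
      by (simp add: algebra_simps power2_eq_square)
    finally show ?thesis .
  qed
  ultimately show ?thesis
    by simp
qed

lemma Li2_exp_inversion:
  assumes "0 < Re w" "Re w < 1"
  shows "Li2 (exp (2 * pi * \<i> * w)) + Li2 (exp (- 2 * pi * \<i> * w)) = Li2_inversion_poly w"
proof (rule eq_on_convex_if_same_derivative[OF convex_unit_strip, where a="1/2"
      and f="\<lambda>w. Li2 (exp (2 * pi * \<i> * w)) + Li2 (exp (- 2 * pi * \<i> * w))"
      and g=Li2_inversion_poly and h="\<lambda>y. of_real (pi ^ 2) * (4 * y - 2)"])
  show "(Li2_inversion_poly has_field_derivative of_real (pi ^ 2) * (4 * y - 2)) (at y)" for y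
    unfolding Li2_inversion_poly_def by (auto intro!: derivative_eq_intros)
  have "exp (pi * \<i>) = -1" "exp (- (pi * \<i>)) = -1"
    by (simp_all add: exp_minus)
  then show "Li2 (exp (2 * pi * \<i> * (1/2))) + Li2 (exp (- 2 * pi * \<i> * (1/2))) = Li2_inversion_poly (1/2)"
    by (simp add: Li2_minus_one Li2_inversion_poly_def power2_eq_square)
qed (use assms has_field_derivative_Li2_exp_sum in auto)

lemma calL2_unit_strip:
  assumes "0 < Re w" "Re w < 1"
  shows "calL2 w = Li2 (exp (2 * pi * \<i> * w))"
  using Li2_exp_inversion[OF assms] by (simp add: calL2_def Li2_inversion_poly_def diff_eq_eq)

lemma calL2_eq_reflected:
  assumes "Im w < 0 \<or> (0 < Re w \<and> Re w < 1)"
  shows "calL2 w = Li2_inversion_poly w - Li2 (exp (- 2 * pi * \<i> * w))"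
proof (cases "Im w < 0")
  case True
  then show ?thesis
    by (simp add: calL2_def Li2_inversion_poly_def)
next
  case False
  then have "0 < Re w" "Re w < 1"
    using assms by auto
  then have "calL2 w = Li2 (exp (2 * pi * \<i> * w))"
    "Li2 (exp (2 * pi * \<i> * w)) + Li2 (exp (- 2 * pi * \<i> * w)) = Li2_inversion_poly w"
    by (blast intro: calL2_unit_strip Li2_exp_inversion)+
  then show ?thesis
    by (metis add_diff_cancel_right')
qed

section \<open>The function F\<close>

lemma kappa_pos: "kappa > 0"
  by (simp add: kappa_def)

lemma xi_nonzero: "xi p \<noteq> 0"
proof -
  have "Re (xi p) = kappa"
    by (simp add: xi_def)
  then show ?thesis
    using kappa_pos by auto
qed

definition Fp_arg_minus :: "nat \<Rightarrow> complex \<Rightarrow> complex" where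
  "Fp_arg_minus p z = xi p * (1 - z) / (2 * pi * \<i>) - of_nat p + 1"

definition Fp_arg_plus :: "nat \<Rightarrow> complex \<Rightarrow> complex" where
  "Fp_arg_plus p z = xi p * (1 + z) / (2 * pi * \<i>) - of_nat p"

lemma Fp_eq_calL2_args:
  "Fp p z = (calL2 (Fp_arg_minus p z) - calL2 (Fp_arg_plus p z)) / xi p
            - of_real kappa * z + 4 * of_nat p * of_real (pi ^ 2) / xi p"
  by (simp add: Fp_def Fp_arg_minus_def Fp_arg_plus_def)

lemma Fp_args_eq:
  "Fp_arg_minus p z = 1 - \<i> * (of_real kappa - xi p * z) / (2 * pi)"
  "Fp_arg_plus p z = - \<i> * (of_real kappa + xi p * z) / (2 * pi)"
  unfolding Fp_arg_minus_def Fp_arg_plus_def xi_def by (simp_all add: field_simps)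

lemma Re_Im_Fp_args:
  "Re (Fp_arg_minus p z) = 1 - Im (xi p * z) / (2 * pi)"
  "Im (Fp_arg_minus p z) = (Re (xi p * z) - kappa) / (2 * pi)"
  "Re (Fp_arg_plus p z) = Im (xi p * z) / (2 * pi)"
  "Im (Fp_arg_plus p z) = - (kappa + Re (xi p * z)) / (2 * pi)"
  unfolding Fp_args_eq by (simp_all add: field_simps)

lemma Fp_args_in_unit_strip:
  assumes "0 < Im (xi p * z)" "Im (xi p * z) < 2 * pi"
  shows "0 < Re (Fp_arg_minus p z) \<and> Re (Fp_arg_minus p z) < 1"
    and "0 < Re (Fp_arg_plus p z) \<and> Re (Fp_arg_plus p z) < 1"
  using assms by (simp_all add: Re_Im_Fp_args field_simps)

lemma Fp_args_in_lower_half_plane: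
  assumes "- kappa < Re (xi p * z)" "Re (xi p * z) < kappa"
  shows "Im (Fp_arg_minus p z) < 0" and "Im (Fp_arg_plus p z) < 0"
  using assms by (simp_all add: Re_Im_Fp_args field_simps)

lemma exp_Fp_args:
  "exp (2 * pi * \<i> * Fp_arg_minus p z) = exp (xi p * (1 - z))"
  "exp (- 2 * pi * \<i> * Fp_arg_minus p z) = exp (- xi p * (1 - z))"
  "exp (2 * pi * \<i> * Fp_arg_plus p z) = exp (xi p * (1 + z))"
  "exp (- 2 * pi * \<i> * Fp_arg_plus p z) = exp (- xi p * (1 + z))"
proof -
  have "2 * pi * \<i> * Fp_arg_minus p z = xi p * (1 - z) + \<i> * (of_int (1 - int p) * (of_real pi * 2))"
    "- 2 * pi * \<i> * Fp_arg_minus p z = - xi p * (1 - z) + \<i> * (of_int (int p - 1) * (of_real pi * 2))"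
    "2 * pi * \<i> * Fp_arg_plus p z = xi p * (1 + z) + \<i> * (of_int (- int p) * (of_real pi * 2))"
    "- 2 * pi * \<i> * Fp_arg_plus p z = - xi p * (1 + z) + \<i> * (of_int (int p) * (of_real pi * 2))"
    by (simp_all add: Fp_arg_minus_def Fp_arg_plus_def field_simps)
  then show
    "exp (2 * pi * \<i> * Fp_arg_minus p z) = exp (xi p * (1 - z))"
    "exp (- 2 * pi * \<i> * Fp_arg_minus p z) = exp (- xi p * (1 - z))"
    "exp (2 * pi * \<i> * Fp_arg_plus p z) = exp (xi p * (1 + z))"
    "exp (- 2 * pi * \<i> * Fp_arg_plus p z) = exp (- xi p * (1 + z))"
    by (simp_all only: exp_plus_2pin)
qed

lemma Li2_inversion_poly_Fp_args:
  "(Li2_inversion_poly (Fp_arg_minus p z) - Li2_inversion_poly (Fp_arg_plus p z)) / xi p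
     - of_real kappa * z + 4 * of_nat p * of_real (pi ^ 2) / xi p
   = of_real kappa * z - 2 * of_real pi * \<i>"
proof -
  have "Li2_inversion_poly (Fp_arg_minus p z) - Li2_inversion_poly (Fp_arg_plus p z)
      = 2 * of_real kappa * (xi p * z) - 2 * pi * \<i> * of_real kappa"
    unfolding Li2_inversion_poly_def Fp_args_eq by (simp add: field_simps power2_eq_square)
  moreover have "4 * of_nat p * of_real (pi ^ 2) = 2 * pi * \<i> * (of_real kappa - xi p)"
    unfolding xi_def by (simp add: field_simps power2_eq_square)
  ultimately show ?thesis
    using xi_nonzero[of p] by (simp add: field_simps)
qed

theorem lemma3p3:
  fixes p :: nat and z :: complex
  assumes "p > 0"
  shows "(((- kappa < Re (xi p * z) \<and> Re (xi p * z) < kappa) \<or> (0 < Im (xi p * z) \<and> Im (xi p * z) < 2 * pi))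
           \<longrightarrow> Fp p z = (1 / xi p) * Li2 (exp (- xi p * (1 + z))) - (1 / xi p) * Li2 (exp (- xi p * (1 - z)))
                        + of_real kappa * z - 2 * of_real pi * \<i>)
       \<and> ((0 < Im (xi p * z) \<and> Im (xi p * z) < 2 * pi)
           \<longrightarrow> Fp p z = (1 / xi p) * Li2 (exp (xi p * (1 - z))) - (1 / xi p) * Li2 (exp (xi p * (1 + z)))
                        - of_real kappa * z + 4 * of_nat p * of_real (pi^2) / xi p)"
proof (intro conjI impI)
  let ?w1 = "Fp_arg_minus p z" and ?w2 = "Fp_arg_plus p z"
  assume "(- kappa < Re (xi p * z) \<and> Re (xi p * z) < kappa) \<or> (0 < Im (xi p * z) \<and> Im (xi p * z) < 2 * pi)"
  then have "Im ?w1 < 0 \<or> (0 < Re ?w1 \<and> Re ?w1 < 1)" "Im ?w2 < 0 \<or> (0 < Re ?w2 \<and> Re ?w2 < 1)"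
    using Fp_args_in_lower_half_plane[of p z] Fp_args_in_unit_strip[of p z] by blast+
  then have "calL2 ?w1 = Li2_inversion_poly ?w1 - Li2 (exp (- 2 * pi * \<i> * ?w1))"
    "calL2 ?w2 = Li2_inversion_poly ?w2 - Li2 (exp (- 2 * pi * \<i> * ?w2))"
    by (blast intro: calL2_eq_reflected)+
  then have "Fp p z = ((Li2_inversion_poly ?w1 - Li2_inversion_poly ?w2) / xi p
        - of_real kappa * z + 4 * of_nat p * of_real (pi ^ 2) / xi p)
      + (1 / xi p) * Li2 (exp (- xi p * (1 + z))) - (1 / xi p) * Li2 (exp (- xi p * (1 - z)))"
    unfolding Fp_eq_calL2_args exp_Fp_args by (simp add: diff_divide_distrib)
  then show "Fp p z = (1 / xi p) * Li2 (exp (- xi p * (1 + z))) - (1 / xi p) * Li2 (exp (- xi p * (1 - z)))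
                      + of_real kappa * z - 2 * of_real pi * \<i>"
    unfolding Li2_inversion_poly_Fp_args by simp
next
  let ?w1 = "Fp_arg_minus p z" and ?w2 = "Fp_arg_plus p z"
  assume "0 < Im (xi p * z) \<and> Im (xi p * z) < 2 * pi"
  then have "calL2 ?w1 = Li2 (exp (2 * pi * \<i> * ?w1))" "calL2 ?w2 = Li2 (exp (2 * pi * \<i> * ?w2))"
    using Fp_args_in_unit_strip[of p z] calL2_unit_strip by blast+
  then show "Fp p z = (1 / xi p) * Li2 (exp (xi p * (1 - z))) - (1 / xi p) * Li2 (exp (xi p * (1 + z)))
                      - of_real kappa * z + 4 * of_nat p * of_real (pi^2) / xi p"
    unfolding Fp_eq_calL2_args exp_Fp_args by (simp add: diff_divide_distrib)
qed

end
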